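(* Let $w=(w_k)_{k\ge0}$ be a weight sequence with $w_0>0$ and $\omega<\infty$. Suppose that $n\to\infty$ and $m=m(n)$ with $m/n\to\lambda>0$. Then $Y_{(j)}=\omega$ with probability tending to $1$, for every fixed $j$.
   Context: A weight sequence is a sequence $w=(w_k)_{k\ge0}$ of nonnegative reals; $\omega=\sup\{k:w_k>0\}$. Balls-in-boxes: $\mathcal B_{m,n}=\{(y_1,\dots,y_n)\in\{0,1,\dots\}^n:\sum y_i=m\}$, weight $w(y)=\prod_iw_{y_i}$, $Z(m,n)=\sum_{y\in\mathcal B_{m,n}}w(y)$; when $Z(m,n)>0$, $B_{m,n}=(Y_1,\dots,Y_n)$ is random with $P(B_{m,n}=y)=w(y)/Z(m,n)$ (only $m,n$ with $Z(m,n)>0$ are considered). $Y_{(1)}\ge Y_{(2)}\ge\dots\ge Y_{(n)}$ denote $Y_1,\dots,Y_n$ arranged in decreasing order. *)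

theory Defs
  imports Complex_Main
begin

text \<open>omega = sup of the support of the weight sequence (meaningful when it is finite).\<close>
definition omega :: "(nat \<Rightarrow> real) \<Rightarrow> nat" where
  "omega w = Sup {k. 0 < w k}"

text \<open>Balls-in-boxes configurations: (y_1,...,y_n) as a list of length n summing to m.\<close>
definition boxes :: "nat \<Rightarrow> nat \<Rightarrow> nat list set" where
  "boxes m n = {y. length y = n \<and> sum_list y = m}"

definition bweight :: "(nat \<Rightarrow> real) \<Rightarrow> nat list \<Rightarrow> real" where
  "bweight w y = prod_list (map w y)"

definition Zbb :: "(nat \<Rightarrow> real) \<Rightarrow> nat \<Rightarrow> nat \<Rightarrow> real" where
  "Zbb w m n = (\<Sum>y\<in>boxes m n. bweight w y)"

definition bb_prob :: "(nat \<Rightarrow> real) \<Rightarrow> nat \<Rightarrow> nat \<Rightarrow> nat list set \<Rightarrow> real" where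
  "bb_prob w m n A = (\<Sum>y\<in>boxes m n \<inter> A. bweight w y) / Zbb w m n"

text \<open>j-th largest entry Y_(j), for 1 <= j <= length y.\<close>
definition ord_stat :: "nat list \<Rightarrow> nat \<Rightarrow> nat" where
  "ord_stat y j = rev (sort y) ! (j - 1)"

end

theory Submission
  imports Defs
begin

text \<open>Let W = omega w; configurations of positive weight have all entries at most W. If fewer
  than j boxes hold W balls although m grows linearly in n, some value a with 0 < a < W occurs
  in at least K boxes, K of order n. Regrouping the a * W balls of W such boxes into a boxes
  with W balls each changes the weight by a fixed factor. A configuration has at least
  K choose W such regroupings, whereas a pair (image, chosen boxes) determines its preimage and
  the chosen boxes must meet one of the fewer than j + W boxes of the image holding W balls,
  which leaves at most (j + W) * n ^ (W - 1) pairs per image. Hence the failure probability is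
  O(n ^ (W - 1) / (K choose W)) = O(1 / n).\<close>

definition positions :: "nat list \<Rightarrow> nat \<Rightarrow> nat set" where
  "positions y v = {i. i < length y \<and> y ! i = v}"

lemma finite_positions [simp]: "finite (positions y v)"
  unfolding positions_def by simp

lemma positions_subset: "positions y v \<subseteq> {..<length y}"
  unfolding positions_def by auto

lemma card_positions: "card (positions y v) = count_list y v"
  unfolding positions_def count_list_eq_length_filter by (simp add: length_filter_conv_card eq_commute)

lemma finite_boxes: "finite (boxes m n)"
proof (rule finite_subset)
  show "boxes m n \<subseteq> {y. set y \<subseteq> {0..m} \<and> length y = n}"
    unfolding boxes_def using member_le_sum_list by fastforce
  show "finite {y. set y \<subseteq> {0..m} \<and> length y = n}"
    by (rule finite_lists_length_eq) simp
qed

lemma sum_list_conv_sum_nth: "sum_list y = (\<Sum>i<length y. y ! i)"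
  by (simp add: sum_list_sum_nth lessThan_atLeast0)

lemma bweight_conv_prod_nth: "bweight w y = (\<Prod>i<length y. w (y ! i))"
  unfolding bweight_def by (simp add: prod.list_conv_set_nth lessThan_atLeast0)

lemma bweight_nonneg: "(\<And>k. w k \<ge> 0) \<Longrightarrow> bweight w y \<ge> 0"
  unfolding bweight_def by (induction y) auto

lemma bweight_nonzero_imp_nonzero:
  assumes "bweight w y \<noteq> 0" "x \<in> set y"
  shows "w x \<noteq> 0"
proof
  assume "w x = 0"
  hence "0 \<in> set (map w y)" using assms(2) by force
  thus False using assms(1) unfolding bweight_def by (simp add: prod_list_zero_iff)
qed

lemma omega_weight_pos:
  assumes "w 0 > 0" "finite {k. 0 < w k}"
  shows "w (omega w) > 0"
proof -
  have "{k. 0 < w k} \<noteq> {}" using assms(1) by auto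
  thus ?thesis unfolding omega_def using Max_in[OF assms(2)] cSup_eq_Max[OF assms(2)] by simp
qed

lemma le_omega:
  assumes "finite {k. 0 < w k}" "w k > 0"
  shows "k \<le> omega w"
proof -
  have "{k. 0 < w k} \<noteq> {}" using assms(2) by auto
  thus ?thesis unfolding omega_def using assms by (simp add: cSup_eq_Max)
qed

lemma Zbb_nonneg: "(\<And>k. w k \<ge> 0) \<Longrightarrow> Zbb w m n \<ge> 0"
  unfolding Zbb_def by (simp add: sum_nonneg bweight_nonneg)

lemma bb_prob_le_1:
  assumes "\<And>k. w k \<ge> 0"
  shows "bb_prob w m n A \<le> 1"
proof -
  have "(\<Sum>y\<in>boxes m n \<inter> A. bweight w y) \<le> Zbb w m n"
    unfolding Zbb_def by (rule sum_mono2[OF finite_boxes]) (auto simp: bweight_nonneg assms)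
  moreover have "Zbb w m n \<ge> 0" using assms by (rule Zbb_nonneg)
  ultimately show ?thesis unfolding bb_prob_def
    by (cases "Zbb w m n = 0") (auto simp: divide_le_eq_1)
qed

lemma bb_prob_Compl:
  assumes "Zbb w m n > 0"
  shows "bb_prob w m n (- A) = 1 - bb_prob w m n A"
proof -
  have "Zbb w m n = (\<Sum>y\<in>boxes m n - A. bweight w y) + (\<Sum>y\<in>boxes m n \<inter> A. bweight w y)"
    unfolding Zbb_def using sum.Int_Diff[OF finite_boxes, of "bweight w" m n A] by simp
  thus ?thesis unfolding bb_prob_def using assms by (simp add: Diff_eq field_simps)
qed

lemma sum_UN_le_sum:
  fixes f :: "'a \<Rightarrow> real"
  assumes "finite S" "\<And>a. a \<in> S \<Longrightarrow> finite (A a)" "\<And>x. f x \<ge> 0"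
  shows "sum f (\<Union>a\<in>S. A a) \<le> (\<Sum>a\<in>S. sum f (A a))"
  using assms(1,2)
proof (induction S rule: finite_induct)
  case (insert a S)
  have "sum f (A a \<inter> (\<Union>b\<in>S. A b)) \<ge> 0" by (simp add: sum_nonneg assms(3))
  hence "sum f (A a \<union> (\<Union>b\<in>S. A b)) \<le> sum f (A a) + sum f (\<Union>b\<in>S. A b)"
    using sum.union_inter[of "A a" "\<Union>b\<in>S. A b" f] insert.prems insert.hyps(1) by simp
  thus ?case using insert by simp
qed simp

lemma bb_prob_UN_le:
  assumes "\<And>k. w k \<ge> 0" "finite S"
  shows "bb_prob w m n (\<Union>a\<in>S. A a) \<le> (\<Sum>a\<in>S. bb_prob w m n (A a))"
proof -
  have "(\<Sum>y\<in>boxes m n \<inter> (\<Union>a\<in>S. A a). bweight w y) \<le> (\<Sum>a\<in>S. \<Sum>y\<in>boxes m n \<inter> A a. bweight w y)"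
    unfolding Int_UN_distrib by (rule sum_UN_le_sum) (auto simp: assms finite_boxes bweight_nonneg)
  thus ?thesis unfolding bb_prob_def sum_divide_distrib[symmetric]
    by (rule divide_right_mono) (use assms(1) in \<open>rule Zbb_nonneg\<close>)
qed

lemma bb_prob_mono:
  assumes "\<And>k. w k \<ge> 0" "\<And>y. y \<in> boxes m n \<Longrightarrow> y \<in> A \<Longrightarrow> bweight w y \<noteq> 0 \<Longrightarrow> y \<in> B"
  shows "bb_prob w m n A \<le> bb_prob w m n B"
proof -
  have "(\<Sum>y\<in>boxes m n \<inter> A. bweight w y) = (\<Sum>y\<in>boxes m n \<inter> A \<inter> B. bweight w y)"
    using assms(2) by (intro sum.mono_neutral_right) (auto simp: finite_boxes)
  also have "\<dots> \<le> (\<Sum>y\<in>boxes m n \<inter> B. bweight w y)"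
    by (intro sum_mono2) (auto simp: finite_boxes bweight_nonneg assms(1))
  finally show ?thesis
    unfolding bb_prob_def using Zbb_nonneg[of w m n] assms(1) by (intro divide_right_mono) auto
qed

section \<open>Configurations with few maximal boxes\<close>

lemma sorted_nth_eq_max:
  fixes s :: "nat list"
  assumes "sorted s" "\<forall>x\<in>set s. x \<le> W" "1 \<le> j" "j \<le> count_list s W"
  shows "s ! (length s - j) = W"
proof (rule ccontr)
  assume ne: "s ! (length s - j) \<noteq> W"
  have "j \<le> length s" using le_trans[OF assms(4) count_le_length] .
  hence idx: "length s - j < length s" using assms(3) by simp
  hence lt: "s ! (length s - j) < W" using ne assms(2) by (meson nth_mem order_le_neq_trans)
  have "positions s W \<subseteq> {length s - j + 1..<length s}"
  proof
    fix i assume i: "i \<in> positions s W"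
    have "\<not> i \<le> length s - j"
    proof
      assume "i \<le> length s - j"
      hence "s ! i \<le> s ! (length s - j)" using assms(1) idx by (simp add: sorted_nth_mono)
      thus False using i lt unfolding positions_def by simp
    qed
    thus "i \<in> {length s - j + 1..<length s}" using i unfolding positions_def by auto
  qed
  hence "count_list s W \<le> card {length s - j + 1..<length s}"
    unfolding card_positions[symmetric] by (intro card_mono) auto
  thus False using assms(3,4) \<open>j \<le> length s\<close> by simp
qed

lemma ord_stat_eq_max:
  assumes "\<forall>x\<in>set y. x \<le> W" "1 \<le> j" "j \<le> count_list y W"
  shows "ord_stat y j = W"
proof -
  have "count_list (sort y) W = count_list y W"
    unfolding count_list_eq_length_filter using sort_key_stable[of "\<lambda>x. x" W y]
    by (metis (mono_tags) eq_commute filter_cong)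
  hence "sort y ! (length y - j) = W"
    using sorted_nth_eq_max[of "sort y" W j] assms by simp
  moreover have "j \<le> length y" using le_trans[OF assms(3) count_le_length] .
  ultimately show ?thesis
    unfolding ord_stat_def using assms(2) by (simp add: rev_nth Suc_diff_le)
qed

lemma exists_frequent_value:
  assumes "\<forall>x\<in>set y. x \<le> W" "count_list y W < j" "W * j + W * W * K < sum_list y"
  shows "\<exists>a\<in>{1..<W}. K \<le> count_list y a"
proof (rule ccontr)
  assume "\<not> ?thesis"
  hence rare: "count_list y a < K" if "a \<in> {1..<W}" for a using that by force
  let ?c = "count_list y"
  have "sum_list y = (\<Sum>x\<le>W. ?c x * x)"
    using sum_list_map_eq_sum_count2[of y "{..W}" id] assms(1) by auto
  also have "\<dots> \<le> (\<Sum>x\<le>W. (if x = W then ?c W * W else 0) + (if x \<in> {1..<W} then ?c x * W else 0))"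
    by (intro sum_mono) auto
  also have "\<dots> = ?c W * W + (\<Sum>x\<in>{1..<W}. ?c x * W)"
  proof -
    have "{..W} \<inter> {1..<W} = {1..<W}" by auto
    thus ?thesis by (simp add: sum.distrib sum.If_cases flip: atLeastLessThan_iff)
  qed
  also have "\<dots> \<le> j * W + (\<Sum>x\<in>{1..<W}. K * W)"
    using assms(2) rare by (intro add_mono sum_mono mult_right_mono) (auto simp: less_imp_le)
  also have "\<dots> \<le> W * j + W * W * K" by simp
  finally show False using assms(3) by simp
qed

section \<open>Regrouping balls\<close>

definition some_subset :: "nat \<Rightarrow> 'a set \<Rightarrow> 'a set" where
  "some_subset k I = (SOME J. J \<subseteq> I \<and> card J = k)"

lemma some_subset:
  assumes "finite I" "k \<le> card I"
  shows "some_subset k I \<subseteq> I" "card (some_subset k I) = k"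
proof -
  have "\<exists>J. J \<subseteq> I \<and> card J = k" using obtain_subset_with_card_n[OF assms(2)] by blast
  hence "some_subset k I \<subseteq> I \<and> card (some_subset k I) = k"
    unfolding some_subset_def by (rule someI_ex)
  thus "some_subset k I \<subseteq> I" "card (some_subset k I) = k" by auto
qed

definition regroup :: "nat \<Rightarrow> nat \<Rightarrow> nat list \<Rightarrow> nat set \<Rightarrow> nat list" where
  "regroup W a y I =
     map (\<lambda>i. if i \<in> some_subset a I then W else if i \<in> I then 0 else y ! i) [0..<length y]"

lemma length_regroup [simp]: "length (regroup W a y I) = length y"
  by (simp add: regroup_def)

lemma nth_regroup:
  "i < length y \<Longrightarrow>
     regroup W a y I ! i = (if i \<in> some_subset a I then W else if i \<in> I then 0 else y ! i)"
  by (simp add: regroup_def)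

definition regroup_ratio :: "(nat \<Rightarrow> real) \<Rightarrow> nat \<Rightarrow> nat \<Rightarrow> real" where
  "regroup_ratio w W a = w a ^ W / (w W ^ a * w 0 ^ (W - a))"

context
  fixes W a :: nat and y :: "nat list" and I :: "nat set"
  assumes I_positions: "I \<subseteq> positions y a" and card_I: "card I = W" and a_le: "a \<le> W"
begin

private abbreviation "J \<equiv> some_subset a I"

private lemma finite_I: "finite I"
  by (rule finite_subset[OF I_positions]) simp

private lemma I_less: "I \<subseteq> {..<length y}"
  using I_positions positions_subset by blast

private lemma J: "J \<subseteq> I" "card J = a" "finite J"
  using some_subset[OF finite_I] card_I a_le finite_subset[OF _ finite_I] by auto

private lemma regroup_on_I:
  "i \<in> J \<Longrightarrow> regroup W a y I ! i = W"
  "i \<in> I - J \<Longrightarrow> regroup W a y I ! i = 0"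
  "i < length y \<Longrightarrow> i \<notin> I \<Longrightarrow> regroup W a y I ! i = y ! i"
  using I_less J(1) by (auto simp: nth_regroup)

private lemma y_on_I: "i \<in> I \<Longrightarrow> y ! i = a"
  using I_positions unfolding positions_def by auto

lemma sum_list_regroup: "sum_list (regroup W a y I) = sum_list y"
proof -
  let ?r = "regroup W a y I" and ?O = "{..<length y} - I"
  have "sum_list ?r = (\<Sum>i\<in>?O. ?r ! i) + (\<Sum>i\<in>I. ?r ! i)"
    unfolding sum_list_conv_sum_nth length_regroup by (rule sum.subset_diff[OF I_less]) simp
  also have "\<dots> = (\<Sum>i\<in>?O. ?r ! i) + (\<Sum>i\<in>I - J. ?r ! i) + (\<Sum>i\<in>J. ?r ! i)"
    using sum.subset_diff[OF J(1) finite_I] by simp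
  also have "\<dots> = (\<Sum>i\<in>?O. y ! i) + a * W"
    using J(2) regroup_on_I by simp
  also have "a * W = (\<Sum>i\<in>I. y ! i)"
    using card_I y_on_I by simp
  finally show ?thesis
    unfolding sum_list_conv_sum_nth using sum.subset_diff[OF I_less, of "(!) y"] by simp
qed

lemma bweight_regroup:
  fixes w :: "nat \<Rightarrow> real"
  assumes "w 0 > 0" "w W > 0"
  shows "bweight w y = regroup_ratio w W a * bweight w (regroup W a y I)"
proof -
  let ?r = "regroup W a y I" and ?O = "{..<length y} - I"
  define R where "R = (\<Prod>i\<in>?O. w (y ! i))"
  have "bweight w ?r = (\<Prod>i\<in>?O. w (?r ! i)) * (\<Prod>i\<in>I. w (?r ! i))"
    unfolding bweight_conv_prod_nth length_regroup by (rule prod.subset_diff[OF I_less]) simp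
  also have "\<dots> = (\<Prod>i\<in>?O. w (?r ! i)) * (\<Prod>i\<in>I - J. w (?r ! i)) * (\<Prod>i\<in>J. w (?r ! i))"
    using prod.subset_diff[OF J(1) finite_I, of "\<lambda>i. w (?r ! i)"] by (simp add: mult.assoc)
  also have "\<dots> = R * w 0 ^ (W - a) * w W ^ a"
    using J regroup_on_I card_I finite_I by (simp add: R_def card_Diff_subset)
  finally have r: "bweight w ?r = R * w 0 ^ (W - a) * w W ^ a" .
  have "bweight w y = R * (\<Prod>i\<in>I. w (y ! i))"
    unfolding bweight_conv_prod_nth R_def using prod.subset_diff[OF I_less, of "\<lambda>i. w (y ! i)"] by simp
  also have "(\<Prod>i\<in>I. w (y ! i)) = w a ^ W"
    using card_I y_on_I by simp
  finally show ?thesis unfolding r regroup_ratio_def using assms by (simp add: field_simps)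
qed

lemma count_list_regroup_le: "count_list (regroup W a y I) W \<le> W + count_list y W"
proof -
  have "positions (regroup W a y I) W \<subseteq> I \<union> positions y W"
    using regroup_on_I(3) unfolding positions_def by auto
  hence "count_list (regroup W a y I) W \<le> card (I \<union> positions y W)"
    unfolding card_positions[symmetric] by (intro card_mono) (auto simp: finite_I)
  also have "\<dots> \<le> W + count_list y W"
    using card_Un_le[of I "positions y W"] card_I card_positions by simp
  finally show ?thesis .
qed

lemma regroup_hits: "1 \<le> a \<Longrightarrow> I \<inter> positions (regroup W a y I) W \<noteq> {}"
proof -
  assume "1 \<le> a"
  then obtain i where "i \<in> J" using J(2) by fastforce
  thus ?thesis using J(1) I_less regroup_on_I(1) unfolding positions_def by auto
qed

lemma regroup_eq_imp_eq:
  assumes "I \<subseteq> positions y' a" "length y' = length y" "regroup W a y' I = regroup W a y I"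
  shows "y' = y"
proof (rule nth_equalityI)
  fix i assume i: "i < length y'"
  show "y' ! i = y ! i"
  proof (cases "i \<in> I")
    case True thus ?thesis using assms(1) y_on_I unfolding positions_def by auto
  next
    case False
    have "regroup W a y' I ! i = regroup W a y I ! i" using assms(3) by simp
    moreover have "i \<notin> J" using False J(1) by blast
    ultimately show ?thesis using False i assms(2) by (simp add: nth_regroup)
  qed
qed (fact assms(2))

end

section \<open>The switching bound\<close>

lemma card_subsets_hitting_le:
  assumes "S \<subseteq> {..<n}" "1 \<le> k"
  shows "card {I. I \<subseteq> {..<n} \<and> card I = k \<and> I \<inter> S \<noteq> {}} \<le> card S * n ^ (k - 1)"
proof -
  let ?J = "{J. J \<subseteq> {..<n} \<and> card J = k - 1}"
  have finite_J: "finite ?J" by (rule finite_subset[of _ "Pow {..<n}"]) auto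
  have finite_S: "finite S" using assms(1) finite_subset by blast
  have "{I. I \<subseteq> {..<n} \<and> card I = k \<and> I \<inter> S \<noteq> {}} \<subseteq> (\<Union>x\<in>S. insert x ` ?J)"
  proof
    fix I assume "I \<in> {I. I \<subseteq> {..<n} \<and> card I = k \<and> I \<inter> S \<noteq> {}}"
    then obtain x where "x \<in> I \<inter> S" "I \<subseteq> {..<n}" "card I = k" by blast
    moreover have "finite I" using \<open>I \<subseteq> {..<n}\<close> finite_subset by blast
    ultimately have "I - {x} \<in> ?J" "I = insert x (I - {x})" "x \<in> S" by auto
    thus "I \<in> (\<Union>x\<in>S. insert x ` ?J)" by blast
  qed
  hence "card {I. I \<subseteq> {..<n} \<and> card I = k \<and> I \<inter> S \<noteq> {}} \<le> card (\<Union>x\<in>S. insert x ` ?J)"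
    by (rule card_mono[rotated]) (use finite_S finite_J in auto)
  also have "\<dots> \<le> (\<Sum>x\<in>S. card (insert x ` ?J))"
    by (rule card_UN_le[OF finite_S])
  also have "\<dots> \<le> (\<Sum>x\<in>S. n ^ (k - 1))"
  proof (rule sum_mono)
    fix x
    have "card (insert x ` ?J) \<le> n choose (k - 1)"
      using card_image_le[OF finite_J, of "insert x"] n_subsets[of "{..<n}" "k - 1"] by simp
    also have "\<dots> \<le> n ^ (k - 1)"
      by (cases "k - 1 \<le> n") (auto simp: binomial_le_pow binomial_eq_0)
    finally show "card (insert x ` ?J) \<le> n ^ (k - 1)" .
  qed
  finally show ?thesis by simp
qed

lemma sum_Sigma_fst:
  fixes f :: "'a \<Rightarrow> real"
  assumes "finite A" "\<And>y. y \<in> A \<Longrightarrow> finite (F y)"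
  shows "(\<Sum>p\<in>Sigma A F. f (fst p)) = (\<Sum>y\<in>A. real (card (F y)) * f y)"
  using sum.Sigma[OF assms(1), of F "\<lambda>y I. f y"] assms(2) by (simp add: case_prod_beta)

lemma sum_Sigma_fst_ge:
  fixes f :: "'a \<Rightarrow> real"
  assumes "finite A" "\<And>y. y \<in> A \<Longrightarrow> finite (F y)" "\<And>y. y \<in> A \<Longrightarrow> N \<le> card (F y)"
    and "\<And>y. f y \<ge> 0"
  shows "real N * sum f A \<le> (\<Sum>p\<in>Sigma A F. f (fst p))"
proof -
  have "real N * sum f A \<le> (\<Sum>y\<in>A. real (card (F y)) * f y)"
    unfolding sum_distrib_left using assms(3,4) by (intro sum_mono mult_right_mono) auto
  thus ?thesis using sum_Sigma_fst[OF assms(1,2), where f = f] by simp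
qed

lemma sum_Sigma_fst_le:
  fixes f :: "'a \<Rightarrow> real"
  assumes "finite A" "\<And>y. y \<in> A \<Longrightarrow> finite (F y)" "\<And>y. y \<in> A \<Longrightarrow> card (F y) \<le> N"
    and "\<And>y. f y \<ge> 0"
  shows "(\<Sum>p\<in>Sigma A F. f (fst p)) \<le> real N * sum f A"
proof -
  have "(\<Sum>y\<in>A. real (card (F y)) * f y) \<le> real N * sum f A"
    unfolding sum_distrib_left using assms(3,4) by (intro sum_mono mult_right_mono) auto
  thus ?thesis using sum_Sigma_fst[OF assms(1,2), where f = f] by simp
qed

lemma regroup_pairs:
  fixes m n j :: nat
  assumes "1 \<le> a" "a < W"
  defines "T \<equiv> SIGMA y:{y\<in>boxes m n. count_list y W < j}. {I. I \<subseteq> positions y a \<and> card I = W}"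
    and "U \<equiv> SIGMA y:{y\<in>boxes m n. count_list y W < j + W}.
               {I. I \<subseteq> {..<n} \<and> card I = W \<and> I \<inter> positions y W \<noteq> {}}"
  shows "inj_on (\<lambda>(y, I). (regroup W a y I, I)) T" "(\<lambda>(y, I). (regroup W a y I, I)) ` T \<subseteq> U"
proof -
  have "y = y'" if T: "(y, I) \<in> T" "(y', I) \<in> T" and eq: "regroup W a y I = regroup W a y' I"
    for y y' I
  proof -
    have "I \<subseteq> positions y' a" "card I = W" "length y = length y'"
      using T unfolding T_def boxes_def by auto
    thus "y = y'" using regroup_eq_imp_eq[of I y' a W y] eq assms(2) T(1)
      unfolding T_def by simp
  qed
  thus "inj_on (\<lambda>(y, I). (regroup W a y I, I)) T"
    unfolding inj_on_def by auto
  show "(\<lambda>(y, I). (regroup W a y I, I)) ` T \<subseteq> U"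
  proof clarify
    fix y I assume "(y, I) \<in> T"
    hence I: "I \<subseteq> positions y a" "card I = W" "a \<le> W" and y: "y \<in> boxes m n" "count_list y W < j"
      using assms(2) unfolding T_def by auto
    have "regroup W a y I \<in> boxes m n"
      using y(1) sum_list_regroup[OF I] unfolding boxes_def by simp
    moreover have "count_list (regroup W a y I) W < j + W"
      using count_list_regroup_le[OF I] y(2) by simp
    moreover have "I \<subseteq> {..<n}"
      using I(1) positions_subset[of y a] y(1) unfolding boxes_def by auto
    ultimately show "(regroup W a y I, I) \<in> U"
      unfolding U_def using regroup_hits[OF I assms(1)] I(2) by blast
  qed
qed

lemma bb_prob_frequent_value_le:
  fixes w :: "nat \<Rightarrow> real"
  assumes nonneg: "\<And>k. w k \<ge> 0" and "w 0 > 0" "w W > 0" "1 \<le> a" "a < W"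
  shows "bb_prob w m n {y. count_list y W < j \<and> K \<le> count_list y a} * real (K choose W)
           \<le> regroup_ratio w W a * real (j + W) * real n ^ (W - 1)"
proof -
  define A where "A = {y\<in>boxes m n. count_list y W < j \<and> K \<le> count_list y a}"
  define B where "B = {y\<in>boxes m n. count_list y W < j}"
  define B' where "B' = {y\<in>boxes m n. count_list y W < j + W}"
  define F where "F y = {I. I \<subseteq> positions y a \<and> card I = W}" for y
  define Hit where "Hit y = {I. I \<subseteq> {..<n} \<and> card I = W \<and> I \<inter> positions y W \<noteq> {}}" for y
  define g where "g = (\<lambda>(y, I). (regroup W a y I, I))"
  let ?bw = "\<lambda>p. bweight w (fst p)" and ?c = "regroup_ratio w W a"
  have bw_nonneg: "bweight w y \<ge> 0" for y using nonneg by (rule bweight_nonneg)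
  have c_nonneg: "?c \<ge> 0" unfolding regroup_ratio_def using nonneg by simp
  have fin_F: "finite (F y)" for y
    unfolding F_def by (rule finite_subset[of _ "Pow (positions y a)"]) auto
  have fin_Hit: "finite (Hit y)" for y
    unfolding Hit_def by (rule finite_subset[of _ "Pow {..<n}"]) auto
  have fin: "finite A" "finite B" "finite B'"
    unfolding A_def B_def B'_def using finite_boxes by auto
  have fin_Sigma: "finite (Sigma B F)" "finite (Sigma B' Hit)"
    using fin fin_F fin_Hit by auto
  note pairs = regroup_pairs[OF assms(4,5), of m n j, folded F_def Hit_def B_def B'_def g_def]
  have many_subsets: "K choose W \<le> card (F y)" if "y \<in> A" for y
    using that unfolding F_def A_def n_subsets[OF finite_positions] card_positions
    by (auto intro: binomial_right_mono)
  have few_hits: "card (Hit y) \<le> (j + W) * n ^ (W - 1)" if "y \<in> B'" for y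
  proof -
    have "length y = n" using that unfolding B'_def boxes_def by simp
    hence "card (Hit y) \<le> count_list y W * n ^ (W - 1)"
      unfolding Hit_def card_positions[symmetric]
      using card_subsets_hitting_le[OF positions_subset[of y W], of W] assms(4,5) by simp
    also have "\<dots> \<le> (j + W) * n ^ (W - 1)" using that unfolding B'_def by simp
    finally show ?thesis .
  qed
  have "real (K choose W) * sum (bweight w) A \<le> sum ?bw (Sigma A F)"
    using fin(1) fin_F many_subsets bw_nonneg by (rule sum_Sigma_fst_ge)
  also have "\<dots> \<le> sum ?bw (Sigma B F)"
    by (rule sum_mono2[OF fin_Sigma(1)]) (auto simp: A_def B_def bw_nonneg)
  also have "\<dots> = ?c * sum (?bw \<circ> g) (Sigma B F)"
    unfolding sum_distrib_left
    using bweight_regroup[where w = w, OF _ _ less_imp_le[OF assms(5)] assms(2,3)]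
    by (intro sum.cong) (auto simp: F_def g_def)
  also have "sum (?bw \<circ> g) (Sigma B F) = sum ?bw (g ` Sigma B F)"
    by (rule sum.reindex[OF pairs(1), symmetric])
  also have "\<dots> \<le> sum ?bw (Sigma B' Hit)"
    using pairs(2) by (intro sum_mono2[OF fin_Sigma(2)]) (auto simp: bw_nonneg)
  also have "\<dots> \<le> real ((j + W) * n ^ (W - 1)) * sum (bweight w) B'"
    using fin(3) fin_Hit few_hits bw_nonneg by (rule sum_Sigma_fst_le)
  also have "\<dots> \<le> real ((j + W) * n ^ (W - 1)) * Zbb w m n"
    unfolding Zbb_def by (intro mult_left_mono sum_mono2) (auto simp: B'_def finite_boxes bw_nonneg)
  finally have "real (K choose W) * sum (bweight w) A \<le> ?c * (real ((j + W) * n ^ (W - 1)) * Zbb w m n)"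
    using c_nonneg by (simp add: mult_left_mono)
  moreover have "boxes m n \<inter> {y. count_list y W < j \<and> K \<le> count_list y a} = A"
    unfolding A_def by auto
  ultimately show ?thesis
    unfolding bb_prob_def using Zbb_nonneg[of w m n] nonneg c_nonneg
    by (cases "Zbb w m n = 0") (auto simp: divide_le_eq mult_ac)
qed

lemma bb_prob_ord_stat_ne_omega_le:
  fixes w :: "nat \<Rightarrow> real"
  assumes nonneg: "\<And>k. w k \<ge> 0" and "w 0 > 0" and fin: "finite {k. 0 < w k}"
    and "1 \<le> j" and large: "omega w * j + omega w * omega w * K < m"
  shows "bb_prob w m n {y. ord_stat y j \<noteq> omega w} * real (K choose omega w)
           \<le> (\<Sum>a\<in>{1..<omega w}. regroup_ratio w (omega w) a) * real (j + omega w) * real n ^ (omega w - 1)"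
proof -
  define W where "W = omega w"
  define A where "A a = {y. count_list y W < j \<and> K \<le> count_list y a}" for a
  have "bb_prob w m n {y. ord_stat y j \<noteq> W} \<le> bb_prob w m n (\<Union>a\<in>{1..<W}. A a)"
  proof (rule bb_prob_mono[OF nonneg])
    fix y assume y: "y \<in> boxes m n" "y \<in> {y. ord_stat y j \<noteq> W}" and "bweight w y \<noteq> 0"
    hence "w x > 0" if "x \<in> set y" for x
      using bweight_nonzero_imp_nonzero[OF _ that] nonneg[of x] by force
    hence le_W: "\<forall>x\<in>set y. x \<le> W" unfolding W_def using le_omega[OF fin] by blast
    hence "count_list y W < j" using ord_stat_eq_max[OF _ assms(4)] y(2) by force
    moreover have "sum_list y = m" using y(1) unfolding boxes_def by simp
    ultimately obtain a where "a \<in> {1..<W}" "K \<le> count_list y a"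
      using exists_frequent_value[OF le_W] large unfolding W_def by blast
    thus "y \<in> (\<Union>a\<in>{1..<W}. A a)" using \<open>count_list y W < j\<close> unfolding A_def by blast
  qed
  also have "\<dots> \<le> (\<Sum>a\<in>{1..<W}. bb_prob w m n (A a))"
    by (rule bb_prob_UN_le[OF nonneg]) simp
  finally have "bb_prob w m n {y. ord_stat y j \<noteq> W} * real (K choose W)
                  \<le> (\<Sum>a\<in>{1..<W}. bb_prob w m n (A a)) * real (K choose W)"
    by (rule mult_right_mono) simp
  also have "\<dots> = (\<Sum>a\<in>{1..<W}. bb_prob w m n (A a) * real (K choose W))"
    by (simp add: sum_distrib_right)
  also have "\<dots> \<le> (\<Sum>a\<in>{1..<W}. regroup_ratio w W a * real (j + W) * real n ^ (W - 1))"
    unfolding A_def W_def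
    using bb_prob_frequent_value_le[OF nonneg assms(2) omega_weight_pos[OF assms(2) fin]]
    by (intro sum_mono) auto
  finally show ?thesis unfolding W_def sum_distrib_right .
qed

lemma pow_div_binomial_le:
  fixes kap x :: real
  assumes "0 < kap" "0 < x" "1 \<le> W" "kap * x \<le> real K" "W \<le> K"
  shows "x ^ (W - 1) / real (K choose W) \<le> (real W / kap) ^ W / x"
proof -
  have pos: "0 < (kap * x / real W) ^ W" using assms by simp
  have "(kap * x / real W) ^ W \<le> (real K / real W) ^ W"
    using assms by (intro power_mono divide_right_mono) auto
  also have "\<dots> \<le> real (K choose W)" using binomial_ge_n_over_k_pow_k[OF assms(5)] by simp
  finally have "x ^ (W - 1) / real (K choose W) \<le> x ^ (W - 1) / (kap * x / real W) ^ W"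
    using pos assms by (intro divide_left_mono) auto
  also have "\<dots> = (real W / kap) ^ W / x"
  proof -
    obtain V where "W = Suc V" using assms(3) by (cases W) auto
    thus ?thesis using assms by (simp add: field_simps power_mult_distrib)
  qed
  finally show ?thesis .
qed

lemma eventually_div_ge_linear:
  assumes lim: "(\<lambda>n. real (m n) / real n) \<longlonglongrightarrow> lam" and "lam > 0" "d > 0"
  shows "eventually (\<lambda>n. 0 < n \<and> C < m n div d \<and> lam / (4 * d) * real n \<le> real (m n div d))
           sequentially"
proof -
  have "eventually (\<lambda>n. lam / 2 < real (m n) / real n) sequentially"
    by (rule order_tendstoD(1)[OF lim]) (use assms(2) in simp)
  moreover have "eventually (\<lambda>n. 4 * d / lam * (C + 1) \<le> real n) sequentially"
    using filterlim_real_sequentially by (simp add: filterlim_at_top)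
  ultimately show ?thesis
  proof eventually_elim
    case (elim n)
    have d: "real d > 0" using assms(3) by simp
    have C: "real C + 1 \<le> lam / (4 * d) * real n" using elim(2) assms d by (simp add: field_simps)
    hence "n > 0" using assms d by (auto intro: ccontr)
    hence "lam * real n / 2 < real (m n)" using elim(1) by (simp add: field_simps)
    hence "lam * real n / (2 * d) < real (m n) / d" using d by (simp add: field_simps)
    moreover have "m n < d + m n div d * d" using assms(3) by (rule dividend_less_div_times)
    hence "real (m n) < (real (m n div d) + 1) * d" by (simp add: algebra_simps flip: of_nat_mult of_nat_add)
    hence "real (m n) / d < real (m n div d) + 1" using d by (simp add: field_simps)
    moreover have "lam * real n / (2 * d) = 2 * (lam / (4 * d) * real n)" by simp
    ultimately have "lam / (4 * d) * real n \<le> real (m n div d)" using C by linarith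
    thus ?case using C \<open>n > 0\<close> by linarith
  qed
qed

lemma bb_prob_ord_stat_eq_omega_ge:
  fixes w :: "nat \<Rightarrow> real"
  assumes nonneg: "\<And>k. w k \<ge> 0" and "w 0 > 0" and fin: "finite {k. 0 < w k}" and "1 \<le> j"
    and "kap > 0" "n > 0" and K: "omega w * j + omega w < K" "K * (omega w * omega w + 1) \<le> m"
    and "kap * real n \<le> real K" and "Zbb w m n > 0"
  shows "1 - (\<Sum>a\<in>{1..<omega w}. regroup_ratio w (omega w) a) * real (j + omega w)
               * (real (omega w) / kap) ^ omega w / real n
           \<le> bb_prob w m n {y. ord_stat y j = omega w}"
proof -
  define W where "W = omega w"
  define S where "S = (\<Sum>a\<in>{1..<W}. regroup_ratio w W a) * real (j + W)"
  let ?P = "bb_prob w m n {y. ord_stat y j \<noteq> W}"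
  have "W * j + W * W * K < m" using K unfolding W_def by (simp add: algebra_simps)
  hence bound: "?P * real (K choose W) \<le> S * real n ^ (W - 1)"
    using bb_prob_ord_stat_ne_omega_le[OF assms(1-4)] unfolding S_def W_def by simp
  have S_nonneg: "S \<ge> 0"
    unfolding S_def regroup_ratio_def using nonneg by (simp add: sum_nonneg)
  have "?P \<le> S * (real W / kap) ^ W / real n"
  proof (cases "W = 0")
    case True
    thus ?thesis using bound unfolding S_def by simp
  next
    case False
    have "real (K choose W) > 0" using K unfolding W_def by simp
    hence "?P \<le> S * (real n ^ (W - 1) / real (K choose W))"
      using bound by (simp add: field_simps)
    also have "\<dots> \<le> S * ((real W / kap) ^ W / real n)"
      using pow_div_binomial_le[of kap "real n" W K] assms(5,6,9) K(1) False S_nonneg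
      unfolding W_def by (intro mult_left_mono) auto
    finally show ?thesis by simp
  qed
  moreover have "{y. ord_stat y j = W} = - {y. ord_stat y j \<noteq> W}" by auto
  ultimately show ?thesis
    using bb_prob_Compl[OF assms(10)] unfolding S_def W_def by simp
qed

theorem theorem18p1:
  fixes w :: "nat \<Rightarrow> real" and m :: "nat \<Rightarrow> nat" and lam :: real and j :: nat
  assumes "\<And>k. w k \<ge> 0" and "w 0 > 0" and "finite {k. 0 < w k}"
    and "lam > 0" and "(\<lambda>n. real (m n) / real n) \<longlonglongrightarrow> lam"
    and "j \<ge> 1"
  shows "((\<lambda>n. bb_prob w (m n) n {y. ord_stat y j = omega w}) \<longlongrightarrow> 1)
           (inf sequentially (principal {n. Zbb w (m n) n > 0}))"
proof -
  define W where "W = omega w"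
  \<comment> \<open>K = m div d satisfies W * j + W * W * K < m as soon as K > W * j.\<close>
  define d where "d = W * W + 1"
  define kap where "kap = lam / (4 * real d)"
  define D where "D = (\<Sum>a\<in>{1..<W}. regroup_ratio w W a) * real (j + W) * (real W / kap) ^ W"
  let ?F = "inf sequentially (principal {n. Zbb w (m n) n > 0})"
  have kap: "kap > 0" unfolding kap_def d_def using assms(4) by (simp add: add_pos_nonneg)
  have "eventually (\<lambda>n. 0 < n \<and> W * j + W < m n div d \<and> kap * real n \<le> real (m n div d))
          sequentially"
    using eventually_div_ge_linear[OF assms(5,4), of d "W * j + W"] unfolding kap_def d_def by simp
  hence lower_bound: "eventually (\<lambda>n. 1 - D / real n \<le> bb_prob w (m n) n {y. ord_stat y j = W}) ?F"
    unfolding eventually_inf_principal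
  proof eventually_elim
    case (elim n)
    have "m n div d * (W * W + 1) \<le> m n" unfolding d_def by (rule div_times_less_eq_dividend)
    thus ?case using bb_prob_ord_stat_eq_omega_ge[OF assms(1-3,6) kap] elim
      unfolding D_def W_def by blast
  qed
  have upper_bound: "eventually (\<lambda>n. bb_prob w (m n) n {y. ord_stat y j = W} \<le> 1) ?F"
    by (simp add: bb_prob_le_1 assms(1))
  have "((\<lambda>n. 1 - D / real n) \<longlongrightarrow> 1) ?F"
    using tendsto_diff[OF tendsto_const lim_const_over_n[of D]] by (auto intro: tendsto_mono[OF inf_le1])
  from tendsto_sandwich[OF lower_bound upper_bound this tendsto_const]
  show ?thesis unfolding W_def .
qed

end
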